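(* Let $S$ be a closed densely defined symmetric operator on a Hilbert space $\mathcal{H}$ and $V\ge0$ a bounded non-negative operator, and let $A:=S+iV$ with $\mathcal{D}(A)=\mathcal{D}(S)$. If $B$ is an operator extension of $A$ ($A\subset B$) that is dissipative, then $\mathcal{D}(B)\subset\mathcal{D}(S^* )$.
   Context: The inner product is antilinear in the first argument. A densely defined operator $B$ is dissipative if $\mathrm{Im}\langle\psi,B\psi\rangle\ge0$ for all $\psi\in\mathcal{D}(B)$. *)

theory Defs
  imports Complex_Main
begin

class complex_vector = real_vector +
  fixes scaleC :: "complex \<Rightarrow> 'a \<Rightarrow> 'a" (infixr "*\<^sub>C" 75)
  assumes scaleC_add_right: "a *\<^sub>C (x + y) = a *\<^sub>C x + a *\<^sub>C y"
    and scaleC_add_left: "(a + b) *\<^sub>C x = a *\<^sub>C x + b *\<^sub>C x"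
    and scaleC_scaleC: "a *\<^sub>C (b *\<^sub>C x) = (a * b) *\<^sub>C x"
    and scaleC_one: "1 *\<^sub>C x = x"
    and scaleR_scaleC: "scaleR r x = complex_of_real r *\<^sub>C x"

text \<open>Inner product, antilinear in the first argument, linear in the second.\<close>
class complex_inner = complex_vector +
  fixes cinner :: "'a \<Rightarrow> 'a \<Rightarrow> complex"
  assumes cinner_commute: "cinner x y = cnj (cinner y x)"
    and cinner_add_right: "cinner x (y + z) = cinner x y + cinner x z"
    and cinner_scaleC_right: "cinner x (a *\<^sub>C y) = a * cinner x y"
    and cinner_self_real: "Im (cinner x x) = 0"
    and cinner_self_nonneg: "0 \<le> Re (cinner x x)"
    and cinner_self_eq_zero: "cinner x x = 0 \<longleftrightarrow> x = 0"

definition cnorm :: "'a::complex_inner \<Rightarrow> real" where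
  "cnorm x = sqrt (Re (cinner x x))"

class chilbert_space = complex_inner +
  assumes norm_complete:
    "(\<forall>e>0. \<exists>N. \<forall>m\<ge>N. \<forall>n\<ge>N. sqrt (Re (cinner (X m - X n) (X m - X n))) < e)
      \<Longrightarrow> \<exists>L. (\<lambda>n. sqrt (Re (cinner (X n - L) (X n - L)))) \<longlonglongrightarrow> 0"

definition csubspace :: "'a::complex_vector set \<Rightarrow> bool" where
  "csubspace D \<longleftrightarrow> 0 \<in> D \<and> (\<forall>x\<in>D. \<forall>y\<in>D. x + y \<in> D) \<and> (\<forall>c. \<forall>x\<in>D. c *\<^sub>C x \<in> D)"

definition lin_op :: "'a::complex_vector set \<Rightarrow> ('a \<Rightarrow> 'a) \<Rightarrow> bool" where
  "lin_op D T \<longleftrightarrow> csubspace D \<and>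
     (\<forall>x\<in>D. \<forall>y\<in>D. T (x + y) = T x + T y) \<and> (\<forall>c. \<forall>x\<in>D. T (c *\<^sub>C x) = c *\<^sub>C T x)"

definition dense_set :: "'a::complex_inner set \<Rightarrow> bool" where
  "dense_set D \<longleftrightarrow> (\<forall>x. \<forall>e>0. \<exists>y\<in>D. cnorm (x - y) < e)"

definition densely_defined :: "'a::complex_inner set \<Rightarrow> ('a \<Rightarrow> 'a) \<Rightarrow> bool" where
  "densely_defined D T \<longleftrightarrow> lin_op D T \<and> dense_set D"

definition closed_op :: "'a::complex_inner set \<Rightarrow> ('a \<Rightarrow> 'a) \<Rightarrow> bool" where
  "closed_op D T \<longleftrightarrow> (\<forall>xs x y. (\<forall>n. xs n \<in> D) \<and> (\<lambda>n. cnorm (xs n - x)) \<longlonglongrightarrow> 0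
      \<and> (\<lambda>n. cnorm (T (xs n) - y)) \<longlonglongrightarrow> 0 \<longrightarrow> x \<in> D \<and> T x = y)"

definition symmetric_op :: "'a::complex_inner set \<Rightarrow> ('a \<Rightarrow> 'a) \<Rightarrow> bool" where
  "symmetric_op D T \<longleftrightarrow> densely_defined D T \<and>
     (\<forall>x\<in>D. \<forall>y\<in>D. cinner (T x) y = cinner x (T y))"

definition adjoint_dom :: "'a::complex_inner set \<Rightarrow> ('a \<Rightarrow> 'a) \<Rightarrow> 'a set" where
  "adjoint_dom D T = {y. \<exists>z. \<forall>x\<in>D. cinner (T x) y = cinner x z}"

definition bounded_op :: "('a::complex_inner \<Rightarrow> 'a) \<Rightarrow> bool" where
  "bounded_op V \<longleftrightarrow> lin_op UNIV V \<and> (\<exists>C. \<forall>x. cnorm (V x) \<le> C * cnorm x)"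

definition nonneg_op :: "('a::complex_inner \<Rightarrow> 'a) \<Rightarrow> bool" where
  "nonneg_op V \<longleftrightarrow> (\<forall>x. Im (cinner x (V x)) = 0 \<and> 0 \<le> Re (cinner x (V x)))"

definition dissipative :: "'a::complex_inner set \<Rightarrow> ('a \<Rightarrow> 'a) \<Rightarrow> bool" where
  "dissipative D B \<longleftrightarrow> densely_defined D B \<and> (\<forall>\<psi>\<in>D. 0 \<le> Im (cinner \<psi> (B \<psi>)))"

definition op_ext :: "'a set \<Rightarrow> ('a \<Rightarrow> 'b) \<Rightarrow> 'a set \<Rightarrow> ('a \<Rightarrow> 'b) \<Rightarrow> bool" where
  "op_ext D T D' T' \<longleftrightarrow> D \<subseteq> D' \<and> (\<forall>x\<in>D. T' x = T x)"

end

theory Submission imports Defs begin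

text \<open>
  Let \<open>\<psi> \<in> \<D>(B)\<close> and \<open>x \<in> \<D>(S)\<close>. Dissipativity of \<open>B\<close> at \<open>\<psi> + c x\<close> is a nonnegative
  quadratic form in \<open>c\<close>, and its discriminant gives
  \<open>|\<langle>\<psi>, Bx\<rangle> - \<langle>B\<psi>, x\<rangle>|\<^sup>2 \<le> 4 Im\<langle>\<psi>, B\<psi>\<rangle> Im\<langle>x, Bx\<rangle>\<close>.
  On \<open>\<D>(S)\<close> we have \<open>Im\<langle>x, Bx\<rangle> = \<langle>x, Vx\<rangle> \<le> \<parallel>V\<parallel> \<parallel>x\<parallel>\<^sup>2\<close>, so
  \<open>x \<mapsto> \<langle>\<psi>, Sx\<rangle> = \<langle>\<psi>, Bx\<rangle> - i\<langle>\<psi>, Vx\<rangle>\<close> is a bounded functional on \<open>\<D>(S)\<close>.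
  By the Riesz representation theorem (for a functional on a possibly non-closed subspace,
  obtained by minimising \<open>\<parallel>y\<parallel>\<^sup>2 - 2 Re l(y)\<close>) it equals \<open>\<langle>z, x\<rangle>\<close> for some \<open>z\<close>,
  i.e. \<open>\<psi> \<in> \<D>(S\<^sup>*)\<close>.
\<close>

lemma cinner_add_left: "cinner (x + y) (z::'a::complex_inner) = cinner x z + cinner y z"
  using cinner_commute[of "x + y" z] cinner_add_right[of z x y] cinner_commute[of x z]
    cinner_commute[of y z]
  by simp

lemma cinner_scaleC_left: "cinner (a *\<^sub>C x) (z::'a::complex_inner) = cnj a * cinner x z"
  using cinner_commute[of "a *\<^sub>C x" z] cinner_scaleC_right[of z a x] cinner_commute[of x z]
  by simp

lemma scaleC_minus_one: "(-1) *\<^sub>C (x::'a::complex_vector) = - x"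
  using scaleR_scaleC[of "-1" x] by simp

lemma cinner_minus_left: "cinner (- x) y = - cinner x (y::'a::complex_inner)"
  using cinner_scaleC_left[of "-1" x y] by (simp add: scaleC_minus_one)

lemma cinner_diff_left: "cinner (x - y) z = cinner x z - cinner y (z::'a::complex_inner)"
  by (simp only: diff_conv_add_uminus cinner_add_left cinner_minus_left)

lemma cnorm_nonneg: "0 \<le> cnorm x"
  by (simp add: cnorm_def cinner_self_nonneg)

lemma cnorm_power2: "cnorm x ^ 2 = Re (cinner x x)"
  by (simp add: cnorm_def cinner_self_nonneg)

lemma cnj_mult_self: "cnj z * z = complex_of_real ((cmod z)^2)"
  by (metis complex_norm_square mult.commute of_real_power)

lemma Re_cinner_self_add_scaleC:
  fixes x y :: "'a::complex_inner"
  shows "Re (cinner (x + c *\<^sub>C y) (x + c *\<^sub>C y)) =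
    Re (cinner x x) + 2 * Re (c * cinner x y) + (cmod c)^2 * Re (cinner y y)"
proof -
  have "cinner (x + c *\<^sub>C y) (x + c *\<^sub>C y) =
      cinner x x + c * cinner x y + cnj c * cinner y x + cnj c * c * cinner y y"
    by (simp add: cinner_add_left cinner_add_right cinner_scaleC_left cinner_scaleC_right
        algebra_simps)
  moreover have "Re (cnj c * cinner y x) = Re (c * cinner x y)"
    by (metis cinner_commute complex_cnj_cnj complex_cnj_mult cnj.simps(1))
  moreover have "cnj c * c = complex_of_real ((cmod c)^2)"
    by (rule cnj_mult_self)
  ultimately show ?thesis by simp
qed

lemma Re_cinner_self_scaleC:
  "Re (cinner (c *\<^sub>C x) (c *\<^sub>C x)) = (cmod c)^2 * Re (cinner x (x::'a::complex_inner))"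
proof -
  have "cinner (c *\<^sub>C x) (c *\<^sub>C x) = (cnj c * c) * cinner x x"
    by (simp add: cinner_scaleC_left cinner_scaleC_right)
  then show ?thesis unfolding cnj_mult_self by simp
qed

lemma quadratic_nonneg_discriminant:
  fixes a b c :: real
  assumes nonneg: "\<And>t. 0 \<le> a + 2 * t * b + t^2 * c" and "0 \<le> c"
  shows "b^2 \<le> a * c"
proof (cases "c = 0")
  case True
  have "b = 0"
  proof (rule ccontr)
    assume "b \<noteq> 0"
    then have "2 * (- (\<bar>a\<bar> + 1) / (2 * b)) * b = - (\<bar>a\<bar> + 1)" by simp
    with nonneg[of "- (\<bar>a\<bar> + 1) / (2 * b)"] True show False by simp
  qed
  with True show ?thesis by simp
next
  case False
  with \<open>0 \<le> c\<close> have c: "c > 0" by simp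
  have "0 \<le> a + 2 * (- b / c) * b + (- b / c)^2 * c" by (rule nonneg)
  then have "0 \<le> (a + 2 * (- b / c) * b + (- b / c)^2 * c) * c" using c by simp
  also have "\<dots> = a * c - b^2"
    using c by (simp add: field_simps power2_eq_square)
  finally show ?thesis by simp
qed

lemma Re_cinner_le_cnorm_mult: "(Re (cinner x y))^2 \<le> (cnorm x * cnorm (y::'a::complex_inner))^2"
proof -
  have "(Re (cinner x y))^2 \<le> Re (cinner x x) * Re (cinner y y)"
  proof (rule quadratic_nonneg_discriminant)
    show "0 \<le> Re (cinner x x) + 2 * t * Re (cinner x y) + t^2 * Re (cinner y y)" for t
      using Re_cinner_self_add_scaleC[of x "complex_of_real t" y]
        cinner_self_nonneg[of "x + complex_of_real t *\<^sub>C y"]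
      by simp
  qed (rule cinner_self_nonneg)
  then show ?thesis by (simp add: power_mult_distrib cnorm_power2)
qed

text \<open>The complex case reduces to the real one by rotating \<open>y\<close> so that \<open>\<langle>x, y\<rangle>\<close> becomes real.\<close>
lemma cmod_cinner_le_cnorm_mult: "cmod (cinner x y) \<le> cnorm x * cnorm (y::'a::complex_inner)"
proof (cases "cinner x y = 0")
  case True
  then show ?thesis by (simp add: cnorm_nonneg)
next
  case False
  define w where "w = cinner x y"
  define c where "c = cnj w / complex_of_real (cmod w)"
  have "cmod c = 1" using False by (simp add: c_def w_def norm_divide)
  have "c * w = complex_of_real ((cmod w)^2) / complex_of_real (cmod w)"
    by (simp add: c_def cnj_mult_self)
  also have "\<dots> = complex_of_real (cmod w)"
    using False by (simp add: w_def power2_eq_square)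
  finally have "Re (cinner x (c *\<^sub>C y)) = cmod w"
    by (simp add: cinner_scaleC_right w_def)
  moreover have "cnorm (c *\<^sub>C y) = cnorm y"
    using \<open>cmod c = 1\<close> by (simp add: cnorm_def Re_cinner_self_scaleC)
  ultimately have "(cmod w)^2 \<le> (cnorm x * cnorm y)^2"
    using Re_cinner_le_cnorm_mult[of x "c *\<^sub>C y"] by simp
  then show ?thesis
    unfolding w_def by (meson cnorm_nonneg mult_nonneg_nonneg power2_le_imp_le)
qed

lemma tendsto_Re_cinner_left:
  fixes Y :: "nat \<Rightarrow> 'a::complex_inner"
  assumes "(\<lambda>n. cnorm (Y n - L)) \<longlonglongrightarrow> 0"
  shows "(\<lambda>n. Re (cinner (Y n) x)) \<longlonglongrightarrow> Re (cinner L x)"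
proof -
  have "norm (Re (cinner (Y n) x) - Re (cinner L x)) \<le> norm (cnorm (Y n - L)) * cnorm x" for n
  proof -
    have "norm (Re (cinner (Y n) x) - Re (cinner L x)) \<le> cmod (cinner (Y n - L) x)"
      using abs_Re_le_cmod[of "cinner (Y n) x - cinner L x"] by (simp add: cinner_diff_left)
    also have "\<dots> \<le> cnorm (Y n - L) * cnorm x" by (rule cmod_cinner_le_cnorm_mult)
    finally show ?thesis by (simp add: cnorm_nonneg)
  qed
  then have "(\<lambda>n. Re (cinner (Y n) x) - Re (cinner L x)) \<longlonglongrightarrow> 0"
    by (intro tendsto_0_le[OF assms] always_eventually) blast
  then show ?thesis by (rule LIM_zero_cancel)
qed

locale linear_functional_on =
  fixes D :: "'a::complex_inner set" and l :: "'a \<Rightarrow> complex"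
  assumes subspace: "csubspace D"
    and additive: "x \<in> D \<Longrightarrow> y \<in> D \<Longrightarrow> l (x + y) = l x + l y"
    and homogeneous: "x \<in> D \<Longrightarrow> l (c *\<^sub>C x) = c * l x"
begin

lemma zero_mem: "0 \<in> D"
  and add_mem: "x \<in> D \<Longrightarrow> y \<in> D \<Longrightarrow> x + y \<in> D"
  and scaleC_mem: "x \<in> D \<Longrightarrow> c *\<^sub>C x \<in> D"
  using subspace by (auto simp: csubspace_def)

definition energy :: "'a \<Rightarrow> real" where
  "energy y = Re (cinner y y) - 2 * Re (l y)"

lemma energy_lower_bound:
  assumes "\<forall>x\<in>D. cmod (l x) \<le> K * cnorm x" and "y \<in> D"
  shows "- (K^2) \<le> energy y"
proof -
  have "Re (l y) \<le> K * cnorm y"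
    using assms complex_Re_le_cmod[of "l y"] by fastforce
  moreover have "0 \<le> (cnorm y - K)^2" by simp
  ultimately show ?thesis
    unfolding energy_def cnorm_power2[symmetric] by (simp add: power2_eq_square algebra_simps)
qed

lemma energy_parallelogram:
  assumes "a \<in> D" and "b \<in> D"
  shows "Re (cinner (a - b) (a - b)) = 2 * energy a + 2 * energy b - 4 * energy ((1/2) *\<^sub>C (a + b))"
proof -
  have "Re (cinner ((1/2) *\<^sub>C (a + b)) ((1/2) *\<^sub>C (a + b))) = Re (cinner (a + b) (a + b)) / 4"
    by (simp add: Re_cinner_self_scaleC power2_eq_square)
  moreover have "Re (l ((1/2) *\<^sub>C (a + b))) = (Re (l a) + Re (l b)) / 2"
    using assms by (simp add: homogeneous additive add_mem)
  moreover have "Re (cinner (a + b) (a + b)) = Re (cinner a a) + 2 * Re (cinner a b) + Re (cinner b b)"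
    using Re_cinner_self_add_scaleC[of a 1 b] by (simp add: scaleC_one)
  moreover have "Re (cinner (a - b) (a - b)) = Re (cinner a a) - 2 * Re (cinner a b) + Re (cinner b b)"
    using Re_cinner_self_add_scaleC[of a "-1" b] by (simp add: scaleC_minus_one)
  ultimately show ?thesis unfolding energy_def by simp
qed

lemma energy_add_scaleR:
  assumes "y \<in> D" and "x \<in> D"
  shows "energy (y + complex_of_real t *\<^sub>C x) =
    energy y + 2 * t * (Re (cinner y x) - Re (l x)) + t^2 * Re (cinner x x)"
  using assms Re_cinner_self_add_scaleC[of y "complex_of_real t" x]
  by (simp add: energy_def additive homogeneous scaleC_mem algebra_simps)

context
  fixes m :: real and Y :: "nat \<Rightarrow> 'a"
  assumes energy_ge: "\<forall>y\<in>D. m \<le> energy y"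
    and minimizing: "\<forall>n. Y n \<in> D \<and> energy (Y n) < m + 1 / real (Suc n)"
begin

lemma minimizing_sequence_Cauchy:
  "\<forall>e>0. \<exists>N. \<forall>i\<ge>N. \<forall>j\<ge>N. sqrt (Re (cinner (Y i - Y j) (Y i - Y j))) < e"
proof (intro allI impI)
  fix e :: real
  assume "e > 0"
  then obtain N where N: "inverse (real (Suc N)) < e^2 / 4"
    using reals_Archimedean[of "e^2 / 4"] by auto
  have "sqrt (Re (cinner (Y i - Y j) (Y i - Y j))) < e" if "i \<ge> N" "j \<ge> N" for i j
  proof -
    have "Re (cinner (Y i - Y j) (Y i - Y j)) \<le> 2 * (energy (Y i) + energy (Y j)) - 4 * m"
      using energy_parallelogram[of "Y i" "Y j"] energy_ge minimizing add_mem scaleC_mem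
      by fastforce
    also have "\<dots> \<le> 2 * (1 / real (Suc i) + 1 / real (Suc j))"
      using minimizing by (smt (verit))
    also have "\<dots> \<le> 2 * (1 / real (Suc N) + 1 / real (Suc N))"
      using that by (intro mult_left_mono add_mono divide_left_mono) auto
    also have "\<dots> < e^2" using N by (simp add: field_simps)
    finally have "Re (cinner (Y i - Y j) (Y i - Y j)) < e^2" .
    with \<open>e > 0\<close> show ?thesis by (metis real_sqrt_less_mono real_sqrt_abs abs_of_pos)
  qed
  then show "\<exists>N. \<forall>i\<ge>N. \<forall>j\<ge>N. sqrt (Re (cinner (Y i - Y j) (Y i - Y j))) < e" by blast
qed

text \<open>Letting \<open>n \<rightarrow> \<infinity>\<close> in \<open>energy (Y n + t x) \<ge> m\<close> shows that the first variation of the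
  energy at the limit vanishes in every direction \<open>x \<in> D\<close>.\<close>
lemma minimizing_sequence_limit_represents:
  assumes L: "(\<lambda>n. cnorm (Y n - L)) \<longlonglongrightarrow> 0" and "x \<in> D"
  shows "l x = cinner L x"
proof -
  have Re_eq: "Re (cinner L x) = Re (l x)" if "x \<in> D" for x
  proof -
    define R where "R = Re (cinner L x) - Re (l x)"
    have "0 \<le> 0 + 2 * t * R + t^2 * Re (cinner x x)" for t
    proof -
      have "0 \<le> 1 / real (Suc n) + 2 * t * (Re (cinner (Y n) x) - Re (l x)) + t^2 * Re (cinner x x)"
        for n
        using energy_ge minimizing energy_add_scaleR[of "Y n" x t] \<open>x \<in> D\<close> add_mem scaleC_mem
        by (smt (verit))
      moreover have "(\<lambda>n. 1 / real (Suc n) + 2 * t * (Re (cinner (Y n) x) - Re (l x))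
            + t^2 * Re (cinner x x)) \<longlonglongrightarrow> 0 + 2 * t * R + t^2 * Re (cinner x x)"
        unfolding R_def
        by (intro tendsto_intros tendsto_Re_cinner_left[OF L] LIMSEQ_Suc[OF lim_inverse_n'])
      ultimately show ?thesis by (intro LIMSEQ_le_const) auto
    qed
    then have "R^2 \<le> 0 * Re (cinner x x)"
      by (rule quadratic_nonneg_discriminant) (rule cinner_self_nonneg)
    then show ?thesis by (simp add: R_def)
  qed
  have "Im (cinner L x) = Im (l x)"
    using Re_eq[of "\<i> *\<^sub>C x"] \<open>x \<in> D\<close> by (simp add: scaleC_mem homogeneous cinner_scaleC_right)
  with Re_eq[OF \<open>x \<in> D\<close>] show ?thesis by (simp add: complex_eq_iff)
qed

end

end

lemma riesz_representation_on_subspace: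
  fixes l :: "'a::chilbert_space \<Rightarrow> complex"
  assumes "linear_functional_on D l" and bounded: "\<forall>x\<in>D. cmod (l x) \<le> K * cnorm x"
  shows "\<exists>z. \<forall>x\<in>D. l x = cinner z x"
proof -
  interpret linear_functional_on D l by fact
  define m where "m = Inf (energy ` D)"
  have "bdd_below (energy ` D)"
    using energy_lower_bound[OF bounded] by (auto intro!: bdd_belowI)
  then have energy_ge: "\<forall>y\<in>D. m \<le> energy y"
    unfolding m_def by (simp add: cInf_lower)
  have "\<exists>y\<in>D. energy y < m + 1 / real (Suc n)" for n
    using cInf_lessD[of "energy ` D" "m + 1 / real (Suc n)"] zero_mem by (auto simp: m_def)
  then obtain Y where minimizing: "\<forall>n. Y n \<in> D \<and> energy (Y n) < m + 1 / real (Suc n)"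
    by metis
  obtain L where "(\<lambda>n. cnorm (Y n - L)) \<longlonglongrightarrow> 0"
    using norm_complete[OF minimizing_sequence_Cauchy[OF energy_ge minimizing]]
    unfolding cnorm_def by blast
  then show ?thesis
    using minimizing_sequence_limit_represents[OF energy_ge minimizing] by blast
qed

lemma bounded_functional_imp_adjoint_dom:
  fixes S :: "'a::chilbert_space \<Rightarrow> 'a"
  assumes "lin_op D S" and "\<forall>x\<in>D. cmod (cinner \<psi> (S x)) \<le> K * cnorm x"
  shows "\<psi> \<in> adjoint_dom D S"
proof -
  have "linear_functional_on D (\<lambda>x. cinner \<psi> (S x))"
    using assms(1) by unfold_locales (auto simp: lin_op_def cinner_add_right cinner_scaleC_right)
  then obtain z where "\<forall>x\<in>D. cinner \<psi> (S x) = cinner z x"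
    using riesz_representation_on_subspace assms(2) by blast
  then have "\<forall>x\<in>D. cinner (S x) \<psi> = cinner x z"
    by (metis cinner_commute)
  then show ?thesis unfolding adjoint_dom_def by blast
qed

lemma Im_cinner_apply_add_scaleC:
  assumes "lin_op D B" and "\<psi> \<in> D" and "x \<in> D"
  shows "Im (cinner (\<psi> + c *\<^sub>C x) (B (\<psi> + c *\<^sub>C x))) =
    Im (cinner \<psi> (B \<psi>)) + Im (c * (cinner \<psi> (B x) - cinner (B \<psi>) x)) + (cmod c)^2 * Im (cinner x (B x))"
proof -
  have "B (\<psi> + c *\<^sub>C x) = B \<psi> + c *\<^sub>C B x"
    using assms by (auto simp: lin_op_def csubspace_def)
  then have "cinner (\<psi> + c *\<^sub>C x) (B (\<psi> + c *\<^sub>C x)) = cinner \<psi> (B \<psi>) + c * cinner \<psi> (B x)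
      + cnj (c * cinner (B \<psi>) x) + cnj c * c * cinner x (B x)"
    using cinner_commute[of x "B \<psi>"]
    by (simp add: cinner_add_left cinner_add_right cinner_scaleC_left cinner_scaleC_right algebra_simps)
  moreover have "cnj c * c = complex_of_real ((cmod c)^2)"
    by (rule cnj_mult_self)
  ultimately show ?thesis by (simp add: right_diff_distrib)
qed

text \<open>Dissipativity at \<open>\<psi> - i s E\<^sup>* x\<close>, \<open>s \<in> \<real>\<close>, where \<open>E\<close> is the cross term, gives
  the nonnegative real quadratic \<open>a - s \<bar>E\<bar>\<^sup>2 + s\<^sup>2 \<bar>E\<bar>\<^sup>2 v\<close> in \<open>s\<close>.\<close>
lemma dissipative_cross_term_bound:
  assumes "lin_op D B" and diss: "\<forall>\<phi>\<in>D. 0 \<le> Im (cinner \<phi> (B \<phi>))"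
    and "\<psi> \<in> D" and "x \<in> D"
  shows "(cmod (cinner \<psi> (B x) - cinner (B \<psi>) x))^2 \<le> 4 * Im (cinner \<psi> (B \<psi>)) * Im (cinner x (B x))"
proof -
  define E where "E = cinner \<psi> (B x) - cinner (B \<psi>) x"
  define a where "a = Im (cinner \<psi> (B \<psi>))"
  define v where "v = Im (cinner x (B x))"
  have "a \<ge> 0" "v \<ge> 0" using diss assms(3,4) by (auto simp: a_def v_def)
  have "0 \<le> a + 2 * s * (- ((cmod E)^2 / 2)) + s^2 * ((cmod E)^2 * v)" for s :: real
  proof -
    define c where "c = complex_of_real s * (- \<i>) * cnj E"
    have "c * E = complex_of_real s * (- \<i>) * complex_of_real ((cmod E)^2)"
      by (simp add: c_def mult.assoc cnj_mult_self)
    then have "Im (c * E) = - s * (cmod E)^2" by simp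
    moreover have "(cmod c)^2 = s^2 * (cmod E)^2"
      by (simp add: c_def norm_mult power_mult_distrib)
    moreover have "\<psi> + c *\<^sub>C x \<in> D"
      using assms(1,3,4) by (auto simp: lin_op_def csubspace_def)
    then have "0 \<le> a + Im (c * E) + (cmod c)^2 * v"
      using diss Im_cinner_apply_add_scaleC[OF assms(1,3,4), of c]
      unfolding E_def a_def v_def by fastforce
    ultimately show ?thesis by (simp add: algebra_simps)
  qed
  then have "(- ((cmod E)^2 / 2))^2 \<le> a * ((cmod E)^2 * v)"
    by (rule quadratic_nonneg_discriminant) (simp add: \<open>v \<ge> 0\<close>)
  then have "(cmod E)^2 * (cmod E)^2 \<le> (cmod E)^2 * (4 * a * v)"
    by (simp add: power2_eq_square algebra_simps)
  then have "(cmod E)^2 \<le> 4 * a * v"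
  proof (cases "E = 0")
    case False
    then have "0 < (cmod E)^2" by simp
    with \<open>(cmod E)^2 * (cmod E)^2 \<le> (cmod E)^2 * (4 * a * v)\<close> show ?thesis
      by (metis mult_le_cancel_left_pos)
  qed (simp add: \<open>a \<ge> 0\<close> \<open>v \<ge> 0\<close>)
  then show ?thesis by (simp add: E_def a_def v_def)
qed

lemma cinner_apply_bound_of_dissipative_extension:
  assumes sym: "\<forall>x\<in>DS. \<forall>y\<in>DS. cinner (S x) y = cinner x (S y)"
    and V_bound: "\<forall>x. cnorm (V x) \<le> C * cnorm x" and "0 \<le> C" and "nonneg_op V"
    and "lin_op DB B" and ext: "op_ext DS (\<lambda>x. S x + \<i> *\<^sub>C V x) DB B"
    and diss: "\<forall>\<phi>\<in>DB. 0 \<le> Im (cinner \<phi> (B \<phi>))" and "\<psi> \<in> DB" and "x \<in> DS"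
  shows "cmod (cinner \<psi> (S x)) \<le>
    (2 * sqrt (Im (cinner \<psi> (B \<psi>)) * C) + cnorm (B \<psi>) + cnorm \<psi> * C) * cnorm x"
proof -
  define a where "a = Im (cinner \<psi> (B \<psi>))"
  have "0 \<le> a" using diss \<open>\<psi> \<in> DB\<close> by (simp add: a_def)
  have "x \<in> DB" and Bx: "B x = S x + \<i> *\<^sub>C V x"
    using ext \<open>x \<in> DS\<close> by (auto simp: op_ext_def)
  have Vx: "cmod (cinner y (V x)) \<le> cnorm y * (C * cnorm x)" for y
    using cmod_cinner_le_cnorm_mult[of y "V x"]
      mult_left_mono[OF V_bound[rule_format, of x] cnorm_nonneg[of y]]
    by linarith
  have "cnj (cinner x (S x)) = cinner x (S x)"
    using sym \<open>x \<in> DS\<close> cinner_commute[of "S x" x] by simp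
  then have "Im (cinner x (S x)) = 0"
    by (simp add: complex_eq_iff)
  then have "Im (cinner x (B x)) = Re (cinner x (V x))"
    by (simp add: Bx cinner_add_right cinner_scaleC_right)
  also have "\<dots> \<le> cnorm x * (C * cnorm x)"
    using complex_Re_le_cmod[of "cinner x (V x)"] Vx[of x] by linarith
  finally have "Im (cinner x (B x)) \<le> C * (cnorm x)^2"
    by (simp add: power2_eq_square mult.left_commute)
  then have "4 * a * Im (cinner x (B x)) \<le> 4 * a * (C * (cnorm x)^2)"
    using \<open>0 \<le> a\<close> by (simp add: mult_left_mono)
  moreover have "4 * a * (C * (cnorm x)^2) = (2 * sqrt (a * C) * cnorm x)^2"
    using \<open>0 \<le> a\<close> \<open>0 \<le> C\<close> by (simp add: power_mult_distrib)
  ultimately have "(cmod (cinner \<psi> (B x) - cinner (B \<psi>) x))^2 \<le> (2 * sqrt (a * C) * cnorm x)^2"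
    using dissipative_cross_term_bound[OF \<open>lin_op DB B\<close> diss \<open>\<psi> \<in> DB\<close> \<open>x \<in> DB\<close>]
    unfolding a_def by linarith
  then have "cmod (cinner \<psi> (B x) - cinner (B \<psi>) x) \<le> 2 * sqrt (a * C) * cnorm x"
    by (rule power2_le_imp_le) (simp add: cnorm_nonneg \<open>0 \<le> a\<close> \<open>0 \<le> C\<close>)
  moreover have "cinner \<psi> (S x) =
      (cinner \<psi> (B x) - cinner (B \<psi>) x) + cinner (B \<psi>) x - \<i> * cinner \<psi> (V x)"
    by (simp add: Bx cinner_add_right cinner_scaleC_right)
  then have "cmod (cinner \<psi> (S x)) \<le>
      cmod (cinner \<psi> (B x) - cinner (B \<psi>) x) + cmod (cinner (B \<psi>) x) + cmod (cinner \<psi> (V x))"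
    by (metis norm_triangle_ineq norm_triangle_ineq4 norm_mult norm_ii mult_1 order_trans add_right_mono)
  ultimately have "cmod (cinner \<psi> (S x)) \<le>
      2 * sqrt (a * C) * cnorm x + cnorm (B \<psi>) * cnorm x + cnorm \<psi> * (C * cnorm x)"
    using cmod_cinner_le_cnorm_mult[of "B \<psi>" x] Vx[of \<psi>] by linarith
  then show ?thesis by (simp add: a_def algebra_simps)
qed

theorem lemma6p2:
  fixes S V B :: "'a::chilbert_space \<Rightarrow> 'a" and DS DB :: "'a set"
  assumes "symmetric_op DS S" and "closed_op DS S"
    and "bounded_op V" and "nonneg_op V"
    and "lin_op DB B"
    and "op_ext DS (\<lambda>x. S x + \<i> *\<^sub>C V x) DB B"
    and "dissipative DB B"
  shows "DB \<subseteq> adjoint_dom DS S"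
proof
  fix \<psi>
  assume "\<psi> \<in> DB"
  have "lin_op DS S" and sym: "\<forall>x\<in>DS. \<forall>y\<in>DS. cinner (S x) y = cinner x (S y)"
    using assms(1) by (auto simp: symmetric_op_def densely_defined_def)
  obtain C where "\<forall>x. cnorm (V x) \<le> C * cnorm x" and "0 \<le> C"
  proof -
    obtain C0 where "\<forall>x. cnorm (V x) \<le> C0 * cnorm x"
      using assms(3) by (auto simp: bounded_op_def)
    then have "\<forall>x. cnorm (V x) \<le> max C0 0 * cnorm x"
      by (meson cnorm_nonneg max.cobounded1 mult_right_mono order_trans)
    then show thesis by (rule that) simp
  qed
  moreover have "\<forall>\<phi>\<in>DB. 0 \<le> Im (cinner \<phi> (B \<phi>))"
    using assms(7) by (simp add: dissipative_def)
  ultimately have "\<forall>x\<in>DS. cmod (cinner \<psi> (S x)) \<le>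
      (2 * sqrt (Im (cinner \<psi> (B \<psi>)) * C) + cnorm (B \<psi>) + cnorm \<psi> * C) * cnorm x"
    using cinner_apply_bound_of_dissipative_extension[OF sym _ _ assms(4,5,6) _ \<open>\<psi> \<in> DB\<close>]
    by blast
  then show "\<psi> \<in> adjoint_dom DS S"
    by (rule bounded_functional_imp_adjoint_dom[OF \<open>lin_op DS S\<close>])
qed

end
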